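(* For all positive integers $b_1,\dots,b_s$ and $\gamma$, the series $\widetilde H_{b_1,\dots,b_s}(z)$, with coefficients reduced modulo $3^\gamma$, can be expressed as a linear combination with coefficients in $(\mathbb Z/3^\gamma\mathbb Z)[z,(1+z)^{-1}]$ of the series $1$ and of finitely many series $\widetilde H_{a_1,\dots,a_r}(z)$ ($r\ge1$) in which none of the $a_i$ is divisible by $3$.
   Context: For positive integers $a_1,\dots,a_r$, $$\widetilde H_{a_1,\dots,a_r}(z)=\sum_{k_1>\dots>k_r\ge0}\prod_{j=1}^{r}\left(\frac{z^{3^{k_j}}(1+z^{3^{k_j}})}{1+z^{3^{k_j+1}}}\right)^{a_j},$$ a formal power series in $z$ with integer coefficients (rational functions expanded as power series in $z$); $\widetilde H_{\emptyset}=1$. *)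

theory Defs
  imports "HOL-Computational_Algebra.Formal_Power_Series" "HOL-Computational_Algebra.Polynomial_FPS"
begin

definition recip1 :: "int fps \<Rightarrow> int fps" where
  "recip1 f = fps_right_inverse f 1"

definition hterm :: "nat \<Rightarrow> int fps" where
  "hterm k = fps_X ^ (3 ^ k) * (1 + fps_X ^ (3 ^ k)) * recip1 (1 + fps_X ^ (3 ^ (k + 1)))"

(* index tuples k_1 > ... > k_r >= 0 (as a strictly decreasing list of length r),
   truncated to entries <= n; terms with k_1 > n have order >= 3^k_1 > n *)
definition htuples :: "nat \<Rightarrow> nat \<Rightarrow> nat list set" where
  "htuples r n = {ks. length ks = r \<and> sorted_wrt (>) ks \<and> set ks \<subseteq> {..n}}"

(* \widetilde H_{a_1..a_r}(z); the n-th coefficient of the (formally convergent) sum *)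
definition Htilde :: "nat list \<Rightarrow> int fps" where
  "Htilde as = Abs_fps (\<lambda>n. \<Sum>ks\<in>htuples (length as) n.
      fps_nth (\<Prod>j<length as. hterm (ks ! j) ^ (as ! j)) n)"

(* element p(z) * (1+z)^(-k) of Z[z,(1+z)^(-1)], as an integer power series *)
definition laurent_coeff :: "int poly \<times> nat \<Rightarrow> int fps" where
  "laurent_coeff c = fps_of_poly (fst c) * recip1 (1 + fps_X) ^ snd c"

definition fps_cong :: "int \<Rightarrow> int fps \<Rightarrow> int fps \<Rightarrow> bool" where
  "fps_cong m f g \<longleftrightarrow> (\<forall>n. m dvd (fps_nth f n - fps_nth g n))"

end

theory Submission
  imports Defs
begin

text \<open>
  Write \<open>h\<^sub>k\<close> for the \<open>k\<close>-th summand, so that \<open>H\<^sub>a\<^sub>s\<close> is a nested sum of powers of the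
  \<open>h\<^sub>k\<close>. Since \<open>h\<^sub>0 = z/(1 - z + z\<^sup>2)\<close> and \<open>1 - z + z\<^sup>2 = (1 + z)\<^sup>2 - 3z\<close>, modulo any \<open>3\<^sup>N\<close>
  the series \<open>h\<^sub>0\<close> lies in \<open>\<int>[z, (1+z)\<^sup>-\<^sup>1]\<close>; and the identity
  \<open>h\<^sub>k\<^sub>+\<^sub>1 (1 + 3 (h\<^sub>k - h\<^sub>k\<^sup>3)) = h\<^sub>k\<^sup>3\<close> gives \<open>h\<^sub>k\<^sup>3\<^sup>m \<equiv> h\<^sub>k\<^sub>+\<^sub>1\<^sup>m\<close> up to \<open>3\<close> times a
  polynomial in \<open>h\<^sub>k\<close> independent of \<open>k\<close>. So an index \<open>3m\<close> can be traded for an index \<open>m\<close>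
  whose summation variable is shifted by one; summation by parts removes the shift at the cost
  of boundary terms, which are nested sums of smaller depth. By induction on depth and weight,
  every \<open>H\<^sub>a\<^sub>s\<close> is, modulo \<open>3\<^sup>N\<close>, a combination of series with no index divisible by \<open>3\<close>
  plus \<open>3\<close> times a combination of arbitrary ones, and induction on \<open>N\<close> disposes of the latter.
\<close>

unbundle fps_syntax

section \<open>Congruence of integer power series\<close>

lemma fps_cong_refl [simp]: "fps_cong M f f"
  by (simp add: fps_cong_def)

lemma fps_cong_sym: "fps_cong M f g \<Longrightarrow> fps_cong M g f"
  unfolding fps_cong_def by (metis mod_eq_dvd_iff)

lemma fps_cong_trans: "fps_cong M f g \<Longrightarrow> fps_cong M g h \<Longrightarrow> fps_cong M f h"
  unfolding fps_cong_def by (metis mod_eq_dvd_iff)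

lemma fps_cong_add: "fps_cong M a b \<Longrightarrow> fps_cong M c d \<Longrightarrow> fps_cong M (a + c) (b + d)"
  unfolding fps_cong_def by (simp add: add_diff_add dvd_add)

lemma fps_cong_diff: "fps_cong M a b \<Longrightarrow> fps_cong M c d \<Longrightarrow> fps_cong M (a - c) (b - d)"
  unfolding fps_cong_def
proof (intro allI)
  fix n
  assume "\<forall>n. M dvd a $ n - b $ n" "\<forall>n. M dvd c $ n - d $ n"
  then have "M dvd (a $ n - b $ n) - (c $ n - d $ n)"
    using dvd_diff[of M "a $ n - b $ n" "c $ n - d $ n"] by blast
  then show "M dvd (a - c) $ n - (b - d) $ n"
    by (simp add: algebra_simps)
qed

lemma fps_cong_mult:
  assumes "fps_cong M a b" "fps_cong M c d"
  shows "fps_cong M (a * c) (b * d)"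
  unfolding fps_cong_def
proof
  fix n
  have "a $ i * c $ (n - i) - b $ i * d $ (n - i)
      = (a $ i - b $ i) * c $ (n - i) + b $ i * (c $ (n - i) - d $ (n - i))" for i
    by (simp add: algebra_simps)
  moreover have "M dvd (a $ i - b $ i) * c $ (n - i) + b $ i * (c $ (n - i) - d $ (n - i))" for i
    using assms unfolding fps_cong_def by (intro dvd_add dvd_mult2 dvd_mult) auto
  ultimately show "M dvd (a * c) $ n - (b * d) $ n"
    by (simp add: fps_mult_nth flip: sum_subtractf) (intro dvd_sum, simp)
qed

lemma fps_cong_power: "fps_cong M a b \<Longrightarrow> fps_cong M (a ^ n) (b ^ n)"
  by (induction n) (auto intro: fps_cong_mult)

lemma fps_cong_sum:
  "(\<And>i. i \<in> I \<Longrightarrow> fps_cong M (f i) (g i)) \<Longrightarrow> fps_cong M (\<Sum>i\<in>I. f i) (\<Sum>i\<in>I. g i)"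
  by (induction I rule: infinite_finite_induct) (auto intro: fps_cong_add)

lemma fps_cong_1: "fps_cong 1 f g"
  by (simp add: fps_cong_def)

lemma fps_cong_const_mult:
  "fps_cong M f g \<Longrightarrow> fps_cong (c * M) (fps_const c * f) (fps_const c * g)"
  unfolding fps_cong_def by (simp flip: right_diff_distrib)

section \<open>The ring \<open>\<int>[z, (1+z)\<^sup>-\<^sup>1]\<close>\<close>

lemma recip1_right_inverse: "d > 0 \<Longrightarrow> (1 + fps_X ^ d) * recip1 (1 + fps_X ^ d) = (1 :: int fps)"
  unfolding recip1_def by (intro fps_right_inverse) simp

lemma one_plus_X_times_recip1: "(1 + fps_X) * recip1 (1 + fps_X) = (1 :: int fps)"
  using recip1_right_inverse[of 1] by simp

definition laurent_ring :: "int fps set" where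
  "laurent_ring = range laurent_coeff"

lemma fps_of_poly_in_laurent_ring: "fps_of_poly p \<in> laurent_ring"
  unfolding laurent_ring_def laurent_coeff_def by (rule range_eqI[of _ _ "(p, 0)"]) simp

lemma recip1_one_plus_X_in_laurent_ring: "recip1 (1 + fps_X) \<in> laurent_ring"
  unfolding laurent_ring_def laurent_coeff_def by (rule range_eqI[of _ _ "(1, 1)"]) simp

lemma fps_const_in_laurent_ring [simp]: "fps_const c \<in> laurent_ring"
  using fps_of_poly_in_laurent_ring[of "[:c:]"] by (simp add: fps_of_poly_const)

lemma zero_in_laurent_ring [simp]: "0 \<in> laurent_ring"
  using fps_const_in_laurent_ring[of 0] by simp

lemma one_in_laurent_ring [simp]: "1 \<in> laurent_ring"
  using fps_const_in_laurent_ring[of 1] by simp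

lemma X_in_laurent_ring [simp]: "fps_X \<in> laurent_ring"
  using fps_of_poly_in_laurent_ring[of "[:0, 1:]"] by simp

lemma laurent_ring_mult: "f \<in> laurent_ring \<Longrightarrow> g \<in> laurent_ring \<Longrightarrow> f * g \<in> laurent_ring"
proof (unfold laurent_ring_def laurent_coeff_def, elim rangeE)
  fix c d :: "int poly \<times> nat"
  assume "f = fps_of_poly (fst c) * recip1 (1 + fps_X) ^ snd c"
    and "g = fps_of_poly (fst d) * recip1 (1 + fps_X) ^ snd d"
  then show "f * g \<in> range (\<lambda>c. fps_of_poly (fst c) * recip1 (1 + fps_X) ^ snd c)"
    by (intro range_eqI[of _ _ "(fst c * fst d, snd c + snd d)"])
       (simp add: fps_of_poly_mult power_add algebra_simps)
qed

lemma laurent_ring_add: "f \<in> laurent_ring \<Longrightarrow> g \<in> laurent_ring \<Longrightarrow> f + g \<in> laurent_ring"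
proof (unfold laurent_ring_def laurent_coeff_def, elim rangeE)
  fix c d :: "int poly \<times> nat"
  assume f: "f = fps_of_poly (fst c) * recip1 (1 + fps_X) ^ snd c"
    and g: "g = fps_of_poly (fst d) * recip1 (1 + fps_X) ^ snd d"
  define u :: "int poly" where "u = [:1, 1:]"
  have u: "fps_of_poly u = 1 + fps_X"
    by (simp add: u_def fps_of_poly_pCons)
  have unit: "((1 + fps_X) * recip1 (1 + fps_X)) ^ n = 1" for n
    by (simp add: one_plus_X_times_recip1)
  have common_denominator: "(p * x ^ l + q * x ^ k) * y ^ (k + l) = p * y ^ k * (x * y) ^ l + q * y ^ l * (x * y) ^ k"
    for p q x y :: "int fps" and k l
    by (simp add: power_mult_distrib power_add algebra_simps)
  have "f + g = fps_of_poly (fst c * u ^ snd d + fst d * u ^ snd c) * recip1 (1 + fps_X) ^ (snd c + snd d)"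
    unfolding fps_of_poly_add fps_of_poly_mult fps_of_poly_power u common_denominator
    by (simp add: f g unit)
  then show "f + g \<in> range (\<lambda>c. fps_of_poly (fst c) * recip1 (1 + fps_X) ^ snd c)"
    by (intro range_eqI[of _ _ "(fst c * u ^ snd d + fst d * u ^ snd c, snd c + snd d)"]) simp
qed

lemma laurent_ring_uminus: "f \<in> laurent_ring \<Longrightarrow> - f \<in> laurent_ring"
  using laurent_ring_mult[OF fps_const_in_laurent_ring[of "-1"], of f] by (simp flip: fps_const_neg)

lemma laurent_ring_diff: "f \<in> laurent_ring \<Longrightarrow> g \<in> laurent_ring \<Longrightarrow> f - g \<in> laurent_ring"
  using laurent_ring_add[of f "- g"] laurent_ring_uminus by simp

lemma laurent_ring_power: "f \<in> laurent_ring \<Longrightarrow> f ^ n \<in> laurent_ring"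
  by (induction n) (auto intro: laurent_ring_mult)

lemma laurent_ring_sum: "(\<And>i. i \<in> I \<Longrightarrow> f i \<in> laurent_ring) \<Longrightarrow> (\<Sum>i\<in>I. f i) \<in> laurent_ring"
  by (induction I rule: infinite_finite_induct) (auto intro: laurent_ring_add)


section \<open>Nested sums\<close>

fun nested_sum :: "(nat \<Rightarrow> 'a::comm_ring_1) list \<Rightarrow> nat \<Rightarrow> 'a" where
  "nested_sum [] n = 1"
| "nested_sum (f # fs) n = (\<Sum>k<n. f k * nested_sum fs k)"

text \<open>When the \<open>k\<close>-th value of the first function has order \<open>> k\<close>, coefficient \<open>j\<close> of
  \<open>nested_sum fs n\<close> is the same for all \<open>n > j\<close> (\<open>nested_sum_nth_eq_nested_series_nth\<close>);
  \<open>nested_series\<close> is this formal limit.\<close>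

definition nested_series :: "(nat \<Rightarrow> 'a::comm_ring_1 fps) list \<Rightarrow> 'a fps" where
  "nested_series fs = Abs_fps (\<lambda>j. nested_sum fs (Suc j) $ j)"

lemma nested_series_nth: "nested_series fs $ j = nested_sum fs (Suc j) $ j"
  by (simp add: nested_series_def)

lemma nested_series_Nil [simp]: "nested_series [] = 1"
  by (rule fps_ext) (simp add: nested_series_nth)

definition decreasing_tuples :: "nat \<Rightarrow> nat \<Rightarrow> nat list set" where
  "decreasing_tuples r n = {ks. length ks = r \<and> sorted_wrt (>) ks \<and> set ks \<subseteq> {..<n}}"

lemma finite_decreasing_tuples: "finite (decreasing_tuples r n)"
proof (rule finite_subset)
  show "decreasing_tuples r n \<subseteq> {ks. set ks \<subseteq> {..<n} \<and> length ks = r}"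
    unfolding decreasing_tuples_def by auto
qed (simp add: finite_lists_length_eq)

lemma decreasing_tuples_0: "decreasing_tuples 0 n = {[]}"
  unfolding decreasing_tuples_def by auto

lemma decreasing_tuples_Suc:
  "decreasing_tuples (Suc r) n = (\<lambda>(k, ks). k # ks) ` (SIGMA k:{..<n}. decreasing_tuples r k)"
proof (intro set_eqI iffI)
  fix xs assume "xs \<in> decreasing_tuples (Suc r) n"
  then obtain k ks where "xs = k # ks" "k < n" "ks \<in> decreasing_tuples r k"
    unfolding decreasing_tuples_def by (fastforce simp: length_Suc_conv)
  then show "xs \<in> (\<lambda>(k, ks). k # ks) ` (SIGMA k:{..<n}. decreasing_tuples r k)"
    by force
qed (auto simp: decreasing_tuples_def)

lemma nested_sum_eq_sum_decreasing_tuples: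
  "nested_sum fs n = (\<Sum>ks\<in>decreasing_tuples (length fs) n. \<Prod>j<length fs. (fs ! j) (ks ! j))"
proof (induction fs arbitrary: n)
  case Nil
  then show ?case by (simp add: decreasing_tuples_0)
next
  case (Cons f fs)
  let ?D = "SIGMA k:{..<n}. decreasing_tuples (length fs) k"
  have inj: "inj_on (\<lambda>(k, ks). k # ks) ?D"
    by (auto simp: inj_on_def)
  have "(\<Sum>ks\<in>decreasing_tuples (length (f # fs)) n. \<Prod>j<length (f # fs). ((f # fs) ! j) (ks ! j))
      = (\<Sum>p\<in>?D. \<Prod>j<Suc (length fs). ((f # fs) ! j) ((fst p # snd p) ! j))"
    unfolding length_Cons decreasing_tuples_Suc sum.reindex[OF inj] by (simp add: case_prod_beta)
  also have "\<dots> = (\<Sum>(k, ks)\<in>?D. f k * (\<Prod>j<length fs. (fs ! j) (ks ! j)))"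
    by (simp only: prod.lessThan_Suc_shift) (simp add: case_prod_beta)
  also have "\<dots> = (\<Sum>k<n. f k * nested_sum fs k)"
    by (simp add: sum.Sigma[symmetric] finite_decreasing_tuples Cons sum_distrib_left)
  finally show ?case by simp
qed

lemma nested_sum_sum_slot:
  "finite I \<Longrightarrow> nested_sum (pre @ (\<lambda>k. \<Sum>i\<in>I. g i k) # post) n
     = (\<Sum>i\<in>I. nested_sum (pre @ g i # post) n)"
  by (induction pre arbitrary: n)
     (simp_all add: sum_distrib_right sum_distrib_left sum.swap[of _ I] algebra_simps)

lemma nested_sum_add_slot:
  "nested_sum (pre @ (\<lambda>k. f k + g k) # post) n
     = nested_sum (pre @ f # post) n + nested_sum (pre @ g # post) n"
  by (induction pre arbitrary: n) (simp_all add: algebra_simps sum.distrib)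

lemma nested_sum_mult_slot:
  "nested_sum (pre @ (\<lambda>k. c * f k) # post) n = c * nested_sum (pre @ f # post) n"
  by (induction pre arbitrary: n) (simp_all add: algebra_simps sum_distrib_left)

lemma nested_series_sum_slot:
  "finite I \<Longrightarrow> nested_series (pre @ (\<lambda>k. \<Sum>i\<in>I. g i k) # post)
     = (\<Sum>i\<in>I. nested_series (pre @ g i # post))"
  by (rule fps_ext) (simp add: nested_series_nth nested_sum_sum_slot fps_sum_nth)

lemma nested_series_zero_slot: "nested_series (pre @ (\<lambda>k. 0) # post) = 0"
  using nested_series_sum_slot[of "{}" pre "\<lambda>i k. 0" post] by simp

lemma nested_series_add_slot:
  "nested_series (pre @ (\<lambda>k. f k + g k) # post)
     = nested_series (pre @ f # post) + nested_series (pre @ g # post)"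
  by (rule fps_ext) (simp add: nested_series_nth nested_sum_add_slot)

lemma nested_series_const_mult_slot:
  "nested_series (pre @ (\<lambda>k. fps_const c * f k) # post) = fps_const c * nested_series (pre @ f # post)"
  by (rule fps_ext) (simp add: nested_series_nth nested_sum_mult_slot)

definition order_exceeds_index :: "(nat \<Rightarrow> 'a::zero fps) \<Rightarrow> bool" where
  "order_exceeds_index f \<longleftrightarrow> (\<forall>k i. i \<le> k \<longrightarrow> f k $ i = 0)"

lemma fps_mult_nth_eq_0: "(\<And>i. i \<le> j \<Longrightarrow> f $ i = 0) \<Longrightarrow> (f * g) $ j = (0::'a::comm_ring_1)"
  by (auto simp: fps_mult_nth intro!: sum.neutral)

lemma nested_sum_nth_eq_nested_series_nth:
  assumes "order_exceeds_index f" "j < n"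
  shows "nested_sum (f # fs) n $ j = nested_series (f # fs) $ j"
  using Suc_leI[OF assms(2)] unfolding nested_series_nth
proof (induction n rule: dec_induct)
  case (step n)
  have "(f n * nested_sum fs n) $ j = 0"
    using assms(1) step.hyps unfolding order_exceeds_index_def by (intro fps_mult_nth_eq_0) auto
  then show ?case using step.IH by simp
qed simp

lemma nested_series_mult_slot:
  assumes "order_exceeds_index (hd (pre @ f # post))"
  shows "nested_series (pre @ (\<lambda>k. c * f k) # post) = c * nested_series (pre @ f # post)"
proof (rule fps_ext)
  fix j
  let ?fs = "pre @ f # post"
  obtain g gs where fs: "?fs = g # gs"
    by (cases ?fs) auto
  have "nested_sum ?fs (Suc j) $ i = nested_series ?fs $ i" if "i \<le> j" for i
    using assms that unfolding fs by (intro nested_sum_nth_eq_nested_series_nth) auto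
  then show "nested_series (pre @ (\<lambda>k. c * f k) # post) $ j = (c * nested_series ?fs) $ j"
    by (simp add: nested_series_nth nested_sum_mult_slot fps_mult_nth)
qed

lemma nested_sum_cong_slot:
  "(\<And>k. fps_cong M (f k) (g k))
     \<Longrightarrow> fps_cong M (nested_sum (pre @ f # post) n) (nested_sum (pre @ g # post) n)"
  by (induction pre arbitrary: n) (auto intro!: fps_cong_sum fps_cong_mult)

lemma nested_series_cong_slot:
  "(\<And>k. fps_cong M (f k) (g k))
     \<Longrightarrow> fps_cong M (nested_series (pre @ f # post)) (nested_series (pre @ g # post))"
  using nested_sum_cong_slot unfolding fps_cong_def nested_series_nth by blast

lemma nested_sum_shift_Cons:
  "nested_sum ((\<lambda>k. q (Suc k)) # r # rest) n
     = nested_sum (q # r # rest) n + q n * nested_sum (r # rest) n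
       - nested_sum ((\<lambda>k. q (Suc k) * r k) # rest) n"
  by (induction n) (simp_all add: algebra_simps)

lemma nested_sum_shift_single: "nested_sum [\<lambda>k. q (Suc k)] n = nested_sum [q] n + q n - q 0"
  by (induction n) (simp_all add: algebra_simps)

lemma nested_sum_prefix:
  assumes "\<And>n. nested_sum fs n = nested_sum gs n + nested_sum hs n - nested_sum ls n"
  shows "nested_sum (pre @ fs) n = nested_sum (pre @ gs) n + nested_sum (pre @ hs) n - nested_sum (pre @ ls) n"
proof (induction pre arbitrary: n)
  case (Cons f pre)
  show ?case
    by (simp add: Cons.IH right_diff_distrib distrib_left sum.distrib sum_subtractf)
qed (simp add: assms)

lemma nested_series_prefix:
  assumes "\<And>n. nested_sum fs n = nested_sum gs n + nested_sum hs n - nested_sum ls n"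
  shows "nested_series (pre @ fs) = nested_series (pre @ gs) + nested_series (pre @ hs) - nested_series (pre @ ls)"
  by (rule fps_ext) (simp add: nested_series_nth nested_sum_prefix[OF assms])

text \<open>Summation by parts: shifting the index of one function in a nested series. The upper
  boundary term is absorbed by the preceding function, or vanishes for order reasons if there is
  none; the lower one vanishes unless the shifted function is the last one.\<close>

lemma nested_series_shift_inner:
  "nested_series (pre @ p # (\<lambda>k. q (Suc k)) # r # rest)
     = nested_series (pre @ p # q # r # rest) + nested_series (pre @ (\<lambda>k. p k * q k) # r # rest)
       - nested_series (pre @ p # (\<lambda>k. q (Suc k) * r k) # rest)"
proof (rule nested_series_prefix)
  show "nested_sum (p # (\<lambda>k. q (Suc k)) # r # rest) n
      = nested_sum (p # q # r # rest) n + nested_sum ((\<lambda>k. p k * q k) # r # rest) n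
        - nested_sum (p # (\<lambda>k. q (Suc k) * r k) # rest) n" for n
    by (simp only: nested_sum.simps(2)[of p] nested_sum_shift_Cons)
       (simp add: algebra_simps sum.distrib sum_subtractf)
qed

lemma nested_series_shift_last:
  "nested_series (pre @ [p, \<lambda>k. q (Suc k)])
     = nested_series (pre @ [p, q]) + nested_series (pre @ [\<lambda>k. p k * q k])
       - nested_series (pre @ [\<lambda>k. q 0 * p k])"
proof (rule nested_series_prefix)
  show "nested_sum [p, \<lambda>k. q (Suc k)] n
      = nested_sum [p, q] n + nested_sum [\<lambda>k. p k * q k] n - nested_sum [\<lambda>k. q 0 * p k] n" for n
    by (simp only: nested_sum.simps(2)[of p] nested_sum_shift_single)
       (simp add: algebra_simps sum.distrib sum_subtractf sum_distrib_left)
qed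

lemma nested_series_shift_head:
  assumes "order_exceeds_index q"
  shows "nested_series ((\<lambda>k. q (Suc k)) # r # rest)
           = nested_series (q # r # rest) - nested_series ((\<lambda>k. q (Suc k) * r k) # rest)"
proof (rule fps_ext)
  fix j
  have "(q (Suc j) * nested_sum (r # rest) (Suc j)) $ j = 0"
    using assms unfolding order_exceeds_index_def by (intro fps_mult_nth_eq_0) auto
  then show "nested_series ((\<lambda>k. q (Suc k)) # r # rest) $ j
      = (nested_series (q # r # rest) - nested_series ((\<lambda>k. q (Suc k) * r k) # rest)) $ j"
    unfolding nested_series_nth nested_sum_shift_Cons fps_add_nth fps_sub_nth by simp
qed

lemma nested_series_shift_single:
  assumes "order_exceeds_index q"
  shows "nested_series [\<lambda>k. q (Suc k)] = nested_series [q] - q 0"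
proof (rule fps_ext)
  fix j
  have "q (Suc j) $ j = 0"
    using assms unfolding order_exceeds_index_def by auto
  then show "nested_series [\<lambda>k. q (Suc k)] $ j = (nested_series [q] - q 0) $ j"
    unfolding nested_series_nth nested_sum_shift_single fps_add_nth fps_sub_nth by simp
qed

section \<open>The series \<open>H\<close> and the terms \<open>h\<^sub>k\<close>\<close>

definition hpow :: "nat \<Rightarrow> nat \<Rightarrow> int fps" where
  "hpow a k = hterm k ^ a"

lemma hpow_add: "hpow a k * hpow b k = hpow (a + b) k"
  by (simp add: hpow_def power_add)

lemma Htilde_eq_nested_series: "Htilde as = nested_series (map hpow as)"
proof (rule fps_ext)
  fix n
  have "htuples (length as) n = decreasing_tuples (length as) (Suc n)"
    unfolding htuples_def decreasing_tuples_def by (auto simp: lessThan_Suc_atMost)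
  then show "Htilde as $ n = nested_series (map hpow as) $ n"
    by (simp add: Htilde_def nested_series_nth nested_sum_eq_sum_decreasing_tuples fps_sum_nth hpow_def)
qed

lemma Htilde_Nil [simp]: "Htilde [] = 1"
  by (simp add: Htilde_eq_nested_series)

lemma less_power_3: "k < (3::nat) ^ k"
  by (induction k) auto

lemma order_exceeds_index_hpow:
  assumes "a > 0"
  shows "order_exceeds_index (hpow a)"
  unfolding order_exceeds_index_def
proof (intro allI impI)
  fix k i :: nat
  assume "i \<le> k"
  then have "i < 3 ^ k"
    using less_power_3[of k] by linarith
  obtain b where a: "a = Suc b"
    using assms by (cases a) auto
  have "hpow a k = fps_X ^ (3 ^ k) * ((1 + fps_X ^ 3 ^ k) * recip1 (1 + fps_X ^ 3 ^ (k + 1)) * hterm k ^ b)"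
    by (simp add: hpow_def a hterm_def mult.assoc)
  with \<open>i < 3 ^ k\<close> show "hpow a k $ i = 0"
    by (simp only: fps_X_power_mult_nth) simp
qed

lemma hterm_0_eq:
  "hterm 0 = fps_X * recip1 (1 + fps_X) ^ 2 + fps_const 3 * fps_X * recip1 (1 + fps_X) ^ 2 * hterm 0"
proof -
  define a where "a = recip1 (1 + fps_X ^ 3 :: int fps)"
  have h0: "hterm 0 = fps_X * (1 + fps_X) * a"
    unfolding a_def hterm_def by simp
  have "(1 + fps_X ^ 3) * a = 1"
    unfolding a_def by (rule recip1_right_inverse) simp
  with h0 one_plus_X_times_recip1 show ?thesis
    by (simp add: fps_numeral_fps_const[symmetric]) algebra
qed

lemma hterm_0_cong_laurent_ring: "\<exists>l\<in>laurent_ring. fps_cong (3 ^ N) (hterm 0) l"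
proof (induction N)
  case 0
  show ?case by (rule bexI[OF _ zero_in_laurent_ring]) (simp add: fps_cong_1)
next
  case (Suc N)
  then obtain l where l: "l \<in> laurent_ring" "fps_cong (3 ^ N) (hterm 0) l"
    by blast
  define u where "u = fps_X * recip1 (1 + fps_X) ^ 2"
  have u: "u \<in> laurent_ring"
    unfolding u_def by (intro laurent_ring_mult laurent_ring_power recip1_one_plus_X_in_laurent_ring X_in_laurent_ring)
  have "fps_cong (3 ^ Suc N) (u + fps_const 3 * (u * hterm 0)) (u + fps_const 3 * (u * l))"
    using fps_cong_const_mult[OF fps_cong_mult[OF fps_cong_refl l(2)], of 3 u] by (intro fps_cong_add) auto
  moreover have "u + fps_const 3 * (u * l) \<in> laurent_ring"
    using u l(1) by (intro laurent_ring_add laurent_ring_mult) auto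
  ultimately show ?case
    using hterm_0_eq by (auto simp: u_def mult.assoc mult.left_commute)
qed

text \<open>With \<open>x = z\<^sup>3\<^sup>^\<^sup>k\<close>: \<open>h\<^sub>k = x(1+x)/(1+x\<^sup>3)\<close> and \<open>h\<^sub>k\<^sub>+\<^sub>1 = x\<^sup>3(1+x\<^sup>3)/(1+x\<^sup>9)\<close>.\<close>

lemma hterm_Suc_eq: "hterm (Suc k) + fps_const 3 * (hterm k - hterm k ^ 3) * hterm (Suc k) = hterm k ^ 3"
proof -
  define x :: "int fps" where "x = fps_X ^ (3 ^ k)"
  define a where "a = recip1 (1 + x ^ 3)"
  define b where "b = recip1 (1 + x ^ 9)"
  have x3: "fps_X ^ (3 ^ Suc k) = x ^ 3"
    unfolding x_def by (simp add: power_mult[symmetric] mult.commute)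
  have x9: "fps_X ^ (3 ^ Suc (Suc k)) = x ^ 9"
    unfolding x_def by (simp add: power_mult[symmetric] mult.commute)
  have hk: "hterm k = x * (1 + x) * a"
    unfolding a_def hterm_def x_def[symmetric] using x3 by simp
  have hSuc: "hterm (Suc k) = x ^ 3 * (1 + x ^ 3) * b"
    unfolding b_def hterm_def using x3 x9 by simp
  have "(1 + x ^ 3) * a = 1"
    unfolding a_def x3[symmetric] by (rule recip1_right_inverse) simp
  moreover have "(1 + x ^ 9) * b = 1"
    unfolding b_def x9[symmetric] by (rule recip1_right_inverse) simp
  ultimately show ?thesis
    unfolding hk hSuc by (simp add: fps_numeral_fps_const[symmetric]) algebra
qed

definition laurent_polys :: "int fps poly set" where
  "laurent_polys = {p. \<forall>i. coeff p i \<in> laurent_ring}"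

lemma laurent_polys_pCons: "a \<in> laurent_ring \<Longrightarrow> p \<in> laurent_polys \<Longrightarrow> pCons a p \<in> laurent_polys"
  unfolding laurent_polys_def by (auto simp: coeff_pCons split: nat.splits)

lemma laurent_polys_0 [simp]: "0 \<in> laurent_polys"
  unfolding laurent_polys_def by simp

lemma laurent_polys_1 [simp]: "1 \<in> laurent_polys"
  using laurent_polys_pCons[of 1 0] by (simp add: one_pCons)

lemma laurent_polys_X [simp]: "[:0, 1:] \<in> laurent_polys"
  by (intro laurent_polys_pCons) auto

lemma laurent_polys_add: "p \<in> laurent_polys \<Longrightarrow> q \<in> laurent_polys \<Longrightarrow> p + q \<in> laurent_polys"
  unfolding laurent_polys_def by (auto intro: laurent_ring_add)

lemma laurent_polys_uminus: "p \<in> laurent_polys \<Longrightarrow> - p \<in> laurent_polys"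
  unfolding laurent_polys_def by (auto intro: laurent_ring_uminus)

lemma laurent_polys_diff: "p \<in> laurent_polys \<Longrightarrow> q \<in> laurent_polys \<Longrightarrow> p - q \<in> laurent_polys"
  unfolding laurent_polys_def by (auto intro: laurent_ring_diff)

lemma laurent_polys_mult: "p \<in> laurent_polys \<Longrightarrow> q \<in> laurent_polys \<Longrightarrow> p * q \<in> laurent_polys"
  unfolding laurent_polys_def by (auto simp: coeff_mult intro!: laurent_ring_sum laurent_ring_mult)

lemma laurent_polys_smult: "c \<in> laurent_ring \<Longrightarrow> p \<in> laurent_polys \<Longrightarrow> smult c p \<in> laurent_polys"
  unfolding laurent_polys_def by (auto intro: laurent_ring_mult)

lemma laurent_polys_power: "p \<in> laurent_polys \<Longrightarrow> p ^ n \<in> laurent_polys"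
  by (induction n) (auto intro: laurent_polys_mult)

lemmas laurent_polys_closed =
  laurent_polys_add laurent_polys_uminus laurent_polys_diff laurent_polys_mult
  laurent_polys_smult laurent_polys_power

text \<open>Each substitution into \<open>h\<^sub>k\<^sub>+\<^sub>1 = h\<^sub>k\<^sup>3 - 3 (h\<^sub>k - h\<^sub>k\<^sup>3) h\<^sub>k\<^sub>+\<^sub>1\<close> gains a factor \<open>3\<close>.\<close>

lemma hterm_Suc_cong:
  "\<exists>r\<in>laurent_polys. poly r 0 = 0 \<and>
     (\<forall>k. fps_cong (3 ^ N) (hterm (Suc k)) (hterm k ^ 3 + fps_const 3 * poly r (hterm k)))"
proof (induction N)
  case 0
  show ?case by (rule bexI[OF _ laurent_polys_0]) (simp add: fps_cong_1)
next
  case (Suc N)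
  then obtain r where r: "r \<in> laurent_polys" "poly r 0 = 0"
    "\<And>k. fps_cong (3 ^ N) (hterm (Suc k)) (hterm k ^ 3 + fps_const 3 * poly r (hterm k))"
    by blast
  define r' where "r' = - (([:0, 1:] - [:0, 1:] ^ 3) * ([:0, 1:] ^ 3 + smult (fps_const 3) r))"
  have "r' \<in> laurent_polys"
    unfolding r'_def using r(1) by (intro laurent_polys_closed) auto
  moreover have "poly r' 0 = 0"
    by (simp add: r'_def)
  moreover have "fps_cong (3 ^ Suc N) (hterm (Suc k)) (hterm k ^ 3 + fps_const 3 * poly r' (hterm k))" for k
  proof -
    let ?t = "hterm k" and ?s = "hterm (Suc k)"
    have "fps_cong (3 * 3 ^ N) (fps_const 3 * ((?t - ?t ^ 3) * ?s))
        (fps_const 3 * ((?t - ?t ^ 3) * (?t ^ 3 + fps_const 3 * poly r ?t)))"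
      using r(3)[of k] by (intro fps_cong_const_mult fps_cong_mult fps_cong_refl)
    then have "fps_cong (3 ^ Suc N) (?t ^ 3 - fps_const 3 * ((?t - ?t ^ 3) * ?s))
        (?t ^ 3 - fps_const 3 * ((?t - ?t ^ 3) * (?t ^ 3 + fps_const 3 * poly r ?t)))"
      by (intro fps_cong_diff) auto
    moreover have "?s = ?t ^ 3 - fps_const 3 * ((?t - ?t ^ 3) * ?s)"
      using hterm_Suc_eq[of k] by (simp add: algebra_simps)
    moreover have "?t ^ 3 - fps_const 3 * ((?t - ?t ^ 3) * (?t ^ 3 + fps_const 3 * poly r ?t))
        = ?t ^ 3 + fps_const 3 * poly r' ?t"
      by (simp add: r'_def algebra_simps)
    ultimately show ?thesis
      by simp
  qed
  ultimately show ?case by blast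
qed

lemma cube_plus_3_poly_power:
  assumes "r \<in> laurent_polys" "poly r 0 = 0"
  shows "\<exists>q\<in>laurent_polys. poly q 0 = 0 \<and>
    (\<forall>x. (x ^ 3 + fps_const 3 * poly r x) ^ m = x ^ (3 * m) + fps_const 3 * poly q x)"
proof (induction m)
  case 0
  show ?case by (rule bexI[OF _ laurent_polys_0]) simp
next
  case (Suc m)
  then obtain q where q: "q \<in> laurent_polys" "poly q 0 = 0"
    "\<And>x. (x ^ 3 + fps_const 3 * poly r x) ^ m = x ^ (3 * m) + fps_const 3 * poly q x"
    by blast
  define q' where "q' = q * [:0, 1:] ^ 3 + [:0, 1:] ^ (3 * m) * r + smult (fps_const 3) (q * r)"
  have "q' \<in> laurent_polys"
    unfolding q'_def using q(1) assms(1) by (intro laurent_polys_closed) auto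
  moreover have "poly q' 0 = 0"
    unfolding q'_def using q(2) assms(2) by simp
  moreover have "(x ^ 3 + fps_const 3 * poly r x) ^ Suc m = x ^ (3 * Suc m) + fps_const 3 * poly q' x" for x
    unfolding power_Suc2 q(3) q'_def by (simp add: algebra_simps power_add power_mult)
  ultimately show ?case by blast
qed

lemma hterm_Suc_power_cong:
  "\<exists>q\<in>laurent_polys. poly q 0 = 0 \<and>
     (\<forall>k. fps_cong (3 ^ N) (hpow m (Suc k)) (hpow (3 * m) k + fps_const 3 * poly q (hterm k)))"
proof -
  obtain r where r: "r \<in> laurent_polys" "poly r 0 = 0"
    "\<And>k. fps_cong (3 ^ N) (hterm (Suc k)) (hterm k ^ 3 + fps_const 3 * poly r (hterm k))"
    using hterm_Suc_cong[of N] by blast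
  obtain q where "q \<in> laurent_polys" "poly q 0 = 0"
    "\<And>x. (x ^ 3 + fps_const 3 * poly r x) ^ m = x ^ (3 * m) + fps_const 3 * poly q x"
    using cube_plus_3_poly_power[OF r(1,2), of m] by blast
  with r(3) show ?thesis
    unfolding hpow_def by (metis fps_cong_power)
qed

section \<open>Spans over \<open>\<int>[z, (1+z)\<^sup>-\<^sup>1]\<close> modulo \<open>M\<close>\<close>

inductive_set laurent_span :: "int \<Rightarrow> int fps set \<Rightarrow> int fps set" for M :: int and G :: "int fps set" where
  laurent_span_generator: "g \<in> G \<Longrightarrow> g \<in> laurent_span M G"
| laurent_span_zero: "0 \<in> laurent_span M G"
| laurent_span_add: "f \<in> laurent_span M G \<Longrightarrow> g \<in> laurent_span M G \<Longrightarrow> f + g \<in> laurent_span M G"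
| laurent_span_mult: "f \<in> laurent_span M G \<Longrightarrow> c \<in> laurent_ring \<Longrightarrow> c * f \<in> laurent_span M G"
| laurent_span_cong: "f \<in> laurent_span M G \<Longrightarrow> fps_cong M g f \<Longrightarrow> g \<in> laurent_span M G"

lemma laurent_span_uminus: "f \<in> laurent_span M G \<Longrightarrow> - f \<in> laurent_span M G"
  using laurent_span_mult[where c = "- 1"] laurent_ring_uminus[OF one_in_laurent_ring] by fastforce

lemma laurent_span_diff: "f \<in> laurent_span M G \<Longrightarrow> g \<in> laurent_span M G \<Longrightarrow> f - g \<in> laurent_span M G"
  using laurent_span_add[where g = "- g"] laurent_span_uminus by fastforce

lemma laurent_span_sum: "(\<And>i. i \<in> I \<Longrightarrow> f i \<in> laurent_span M G) \<Longrightarrow> (\<Sum>i\<in>I. f i) \<in> laurent_span M G"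
  by (induction I rule: infinite_finite_induct) (auto intro: laurent_span_zero laurent_span_add)

lemma laurent_span_const_mult:
  "f \<in> laurent_span M G \<Longrightarrow> fps_const c * f \<in> laurent_span (c * M) G"
proof (induction rule: laurent_span.induct)
  case (laurent_span_generator g)
  then show ?case by (intro laurent_span.intros) auto
next
  case laurent_span_zero
  then show ?case by (simp add: laurent_span.laurent_span_zero)
next
  case (laurent_span_add f g)
  then show ?case using laurent_span.laurent_span_add by (fastforce simp: distrib_left)
next
  case (laurent_span_mult f c')
  then show ?case using laurent_span.laurent_span_mult by (fastforce simp: mult.left_commute)
next
  case (laurent_span_cong f g)
  then show ?case using laurent_span.laurent_span_cong fps_cong_const_mult by blast
qed

lemma laurent_span_subset: "G \<subseteq> laurent_span M H \<Longrightarrow> laurent_span M G \<subseteq> laurent_span M H"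
proof
  fix f assume "G \<subseteq> laurent_span M H" "f \<in> laurent_span M G"
  then show "f \<in> laurent_span M H"
    by (induction rule: laurent_span.induct[OF \<open>f \<in> laurent_span M G\<close>])
       (auto intro: laurent_span.intros)
qed

lemma laurent_span_image_sum_repr:
  assumes "f \<in> laurent_span M (h ` I)"
  shows "\<exists>F c. finite F \<and> F \<subseteq> I \<and> (\<forall>i\<in>F. c i \<in> laurent_ring) \<and> fps_cong M f (\<Sum>i\<in>F. c i * h i)"
  using assms
proof (induction rule: laurent_span.induct)
  case (laurent_span_generator g)
  then obtain i where "i \<in> I" "g = h i"
    by blast
  then show ?case
    by (intro exI[of _ "{i}"] exI[of _ "\<lambda>_. 1"]) simp
next
  case laurent_span_zero
  show ?case
    by (intro exI[of _ "{}"]) simp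
next
  case (laurent_span_add f g)
  then obtain F1 c1 F2 c2 where
    F1: "finite F1" "F1 \<subseteq> I" "\<forall>i\<in>F1. c1 i \<in> laurent_ring" "fps_cong M f (\<Sum>i\<in>F1. c1 i * h i)" and
    F2: "finite F2" "F2 \<subseteq> I" "\<forall>i\<in>F2. c2 i \<in> laurent_ring" "fps_cong M g (\<Sum>i\<in>F2. c2 i * h i)"
    by blast
  define c where "c i = (if i \<in> F1 then c1 i else 0) + (if i \<in> F2 then c2 i else 0)" for i
  have "(\<Sum>i\<in>F1 \<union> F2. c i * h i)
      = (\<Sum>i\<in>F1 \<union> F2. if i \<in> F1 then c1 i * h i else 0) + (\<Sum>i\<in>F1 \<union> F2. if i \<in> F2 then c2 i * h i else 0)"
    unfolding c_def sum.distrib[symmetric] by (intro sum.cong) (simp_all add: distrib_right)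
  also have "\<dots> = (\<Sum>i\<in>F1. c1 i * h i) + (\<Sum>i\<in>F2. c2 i * h i)"
    using F1(1) F2(1) by (simp add: sum.If_cases Int_absorb1 Int_absorb2)
  finally have "fps_cong M (f + g) (\<Sum>i\<in>F1 \<union> F2. c i * h i)"
    using F1(4) F2(4) by (simp add: fps_cong_add)
  moreover have "\<forall>i\<in>F1 \<union> F2. c i \<in> laurent_ring"
    using F1(3) F2(3) unfolding c_def by (auto intro: laurent_ring_add)
  ultimately show ?case
    using F1(1,2) F2(1,2) by (intro exI[of _ "F1 \<union> F2"] exI[of _ c]) auto
next
  case (laurent_span_mult f c)
  then obtain F c1 where F: "finite F" "F \<subseteq> I" "\<forall>i\<in>F. c1 i \<in> laurent_ring" "fps_cong M f (\<Sum>i\<in>F. c1 i * h i)"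
    by blast
  have "fps_cong M (c * f) (\<Sum>i\<in>F. (c * c1 i) * h i)"
    using fps_cong_mult[OF fps_cong_refl F(4), of c] by (simp add: sum_distrib_left mult.assoc)
  then show ?case
    using F laurent_span_mult.hyps(2) by (intro exI[of _ F] exI[of _ "\<lambda>i. c * c1 i"]) (auto intro: laurent_ring_mult)
next
  case (laurent_span_cong f g)
  then show ?case
    by (meson fps_cong_trans)
qed

section \<open>Reduction of indices divisible by 3\<close>

definition admissible :: "nat list \<Rightarrow> bool" where
  "admissible as \<longleftrightarrow> (\<forall>a\<in>set as. 0 < a)"

definition reduced :: "nat list \<Rightarrow> bool" where
  "reduced as \<longleftrightarrow> (\<forall>a\<in>set as. 0 < a \<and> \<not> 3 dvd a)"

lemma admissible_simps [simp]:
  "admissible []"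
  "admissible (a # as) \<longleftrightarrow> 0 < a \<and> admissible as"
  "admissible (as @ bs) \<longleftrightarrow> admissible as \<and> admissible bs"
  by (auto simp: admissible_def)

text \<open>Multiples of \<open>3\<close> are allowed arbitrary indices here; induction on the exponent removes
  them in \<open>Htilde_in_laurent_span_reduced\<close>.\<close>

abbreviation reduction_span :: "nat \<Rightarrow> int fps set" where
  "reduction_span N \<equiv> laurent_span (3 ^ N)
     (Htilde ` Collect reduced \<union> (\<lambda>as. fps_const 3 * Htilde as) ` Collect admissible)"

lemma Htilde_reduced_in_reduction_span: "reduced as \<Longrightarrow> Htilde as \<in> reduction_span N"
  by (intro laurent_span_generator) auto

lemma hpow_0_mult_in_laurent_span:
  assumes "f \<in> laurent_span (3 ^ N) G"
  shows "hpow m 0 * f \<in> laurent_span (3 ^ N) G"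
proof -
  obtain l where "l \<in> laurent_ring" "fps_cong (3 ^ N) (hterm 0) l"
    using hterm_0_cong_laurent_ring by blast
  then have "l ^ m * f \<in> laurent_span (3 ^ N) G" "fps_cong (3 ^ N) (hpow m 0 * f) (l ^ m * f)"
    using assms unfolding hpow_def by (auto intro: laurent_span_mult laurent_ring_power fps_cong_mult fps_cong_power)
  then show ?thesis
    by (rule laurent_span_cong)
qed

lemma hpow_0_in_reduction_span: "hpow m 0 \<in> reduction_span N"
  using hpow_0_mult_in_laurent_span[OF Htilde_reduced_in_reduction_span[of "[]"]]
  by (simp add: reduced_def)

lemma order_exceeds_index_hd_map_hpow:
  "admissible (pre @ b # post) \<Longrightarrow> order_exceeds_index (hd (map hpow (pre @ b # post)))"
  by (cases pre) (auto intro: order_exceeds_index_hpow)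

lemma error_term_in_reduction_span:
  assumes "admissible pre" "admissible post" "r \<in> laurent_polys" "poly r 0 = 0"
  shows "fps_const 3 * nested_series (map hpow pre @ (\<lambda>k. poly r (hterm k)) # map hpow post) \<in> reduction_span N"
proof -
  have "(\<lambda>k. poly r (hterm k)) = (\<lambda>k. \<Sum>i\<le>degree r. coeff r i * hpow i k)"
    by (simp add: poly_altdef hpow_def)
  then have "fps_const 3 * nested_series (map hpow pre @ (\<lambda>k. poly r (hterm k)) # map hpow post)
     = (\<Sum>i\<le>degree r. fps_const 3 * nested_series (map hpow pre @ (\<lambda>k. coeff r i * hpow i k) # map hpow post))"
    by (simp add: nested_series_sum_slot sum_distrib_left)
  also have "\<dots> \<in> reduction_span N"
  proof (rule laurent_span_sum)
    fix i
    show "fps_const 3 * nested_series (map hpow pre @ (\<lambda>k. coeff r i * hpow i k) # map hpow post) \<in> reduction_span N"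
    proof (cases "i = 0")
      case True
      then have "coeff r i = 0"
        using assms(4) by (simp add: poly_0_coeff_0)
      then show ?thesis
        by (simp add: nested_series_zero_slot laurent_span_zero)
    next
      case False
      have "nested_series (map hpow pre @ (\<lambda>k. coeff r i * hpow i k) # map hpow post)
          = coeff r i * Htilde (pre @ i # post)"
        using False assms(1,2) order_exceeds_index_hd_map_hpow[of pre i post]
        by (simp add: nested_series_mult_slot Htilde_eq_nested_series)
      moreover have "fps_const 3 * Htilde (pre @ i # post) \<in> reduction_span N"
        using False assms(1,2) by (intro laurent_span_generator) auto
      ultimately show ?thesis
        using assms(3) laurent_span_mult[where c = "coeff r i"]
        by (simp add: laurent_polys_def mult.left_commute)
    qed
  qed
  finally show ?thesis .
qed

lemma shifted_product_in_reduction_span: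
  assumes "admissible pre" "admissible post" "b > 0" "Htilde (pre @ (3 * m + b) # post) \<in> reduction_span N"
  shows "nested_series (map hpow pre @ (\<lambda>k. hpow m (Suc k) * hpow b k) # map hpow post) \<in> reduction_span N"
proof -
  obtain q where q: "q \<in> laurent_polys" "poly q 0 = 0"
    "\<And>k. fps_cong (3 ^ N) (hpow m (Suc k)) (hpow (3 * m) k + fps_const 3 * poly q (hterm k))"
    using hterm_Suc_power_cong[of N m] by blast
  define q' where "q' = q * [:0, 1:] ^ b"
  define error where
    "error = fps_const 3 * nested_series (map hpow pre @ (\<lambda>k. poly q' (hterm k)) # map hpow post)"
  have "fps_cong (3 ^ N) (hpow m (Suc k) * hpow b k) (hpow (3 * m + b) k + fps_const 3 * poly q' (hterm k))" for k
    using fps_cong_mult[OF q(3) fps_cong_refl, of k "hpow b k"]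
    by (simp add: q'_def distrib_right mult.assoc hpow_add flip: hpow_def)
  then have "fps_cong (3 ^ N) (nested_series (map hpow pre @ (\<lambda>k. hpow m (Suc k) * hpow b k) # map hpow post))
      (nested_series (map hpow pre @ (\<lambda>k. hpow (3 * m + b) k + fps_const 3 * poly q' (hterm k)) # map hpow post))"
    by (rule nested_series_cong_slot)
  also have "\<dots> = Htilde (pre @ (3 * m + b) # post) + error"
    by (simp only: error_def nested_series_add_slot nested_series_const_mult_slot Htilde_eq_nested_series
        map_append list.map)
  finally have "fps_cong (3 ^ N) (nested_series (map hpow pre @ (\<lambda>k. hpow m (Suc k) * hpow b k) # map hpow post))
      (Htilde (pre @ (3 * m + b) # post) + error)" .
  moreover have "error \<in> reduction_span N"
    unfolding error_def q'_def using assms q by (intro error_term_in_reduction_span laurent_polys_closed) auto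
  ultimately show ?thesis
    using assms(4) by (meson laurent_span_add laurent_span_cong)
qed

lemma shifted_head_in_reduction_span:
  assumes adm: "admissible (m # post)"
    and unshifted: "Htilde (m # post) \<in> reduction_span N"
    and shorter: "\<And>bs. length bs < length (m # post) \<Longrightarrow> admissible bs \<Longrightarrow> Htilde bs \<in> reduction_span N"
  shows "nested_series ((\<lambda>k. hpow m (Suc k)) # map hpow post) \<in> reduction_span N"
proof (cases post)
  case Nil
  have "nested_series [\<lambda>k. hpow m (Suc k)] = Htilde [m] - hpow m 0"
    using adm by (simp add: nested_series_shift_single order_exceeds_index_hpow Htilde_eq_nested_series)
  then show ?thesis
    using unshifted Nil by (simp add: laurent_span_diff hpow_0_in_reduction_span)
next
  case (Cons b rest)
  have "nested_series ((\<lambda>k. hpow m (Suc k)) # hpow b # map hpow rest)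
      = Htilde (m # b # rest) - nested_series ((\<lambda>k. hpow m (Suc k) * hpow b k) # map hpow rest)"
    using adm by (simp add: nested_series_shift_head order_exceeds_index_hpow Htilde_eq_nested_series)
  moreover have "nested_series ((\<lambda>k. hpow m (Suc k) * hpow b k) # map hpow rest) \<in> reduction_span N"
    using shifted_product_in_reduction_span[of "[]" rest b m N] shorter[of "(3 * m + b) # rest"] adm Cons
    by simp
  ultimately show ?thesis
    using unshifted Cons by (simp add: laurent_span_diff)
qed

lemma shifted_inner_in_reduction_span:
  assumes adm: "admissible (pre @ p # m # post)"
    and unshifted: "Htilde (pre @ p # m # post) \<in> reduction_span N"
    and shorter: "\<And>bs. length bs < length (pre @ p # m # post) \<Longrightarrow> admissible bs \<Longrightarrow> Htilde bs \<in> reduction_span N"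
  shows "nested_series (map hpow pre @ hpow p # (\<lambda>k. hpow m (Suc k)) # map hpow post) \<in> reduction_span N"
proof (cases post)
  case Nil
  have "nested_series (map hpow pre @ [hpow p, \<lambda>k. hpow m (Suc k)])
      = Htilde (pre @ [p, m]) + Htilde (pre @ [p + m]) - nested_series (map hpow pre @ [\<lambda>k. hpow m 0 * hpow p k])"
    by (simp add: nested_series_shift_last hpow_add Htilde_eq_nested_series)
  moreover have "nested_series (map hpow pre @ [\<lambda>k. hpow m 0 * hpow p k]) = hpow m 0 * Htilde (pre @ [p])"
    using adm order_exceeds_index_hd_map_hpow[of pre p "[]"]
    by (simp add: nested_series_mult_slot Htilde_eq_nested_series)
  moreover have "Htilde (pre @ [p + m]) \<in> reduction_span N" "Htilde (pre @ [p]) \<in> reduction_span N"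
    using adm Nil by (auto intro: shorter)
  ultimately show ?thesis
    using unshifted Nil by (simp add: laurent_span_add laurent_span_diff hpow_0_mult_in_laurent_span)
next
  case (Cons b rest)
  have "nested_series (map hpow pre @ hpow p # (\<lambda>k. hpow m (Suc k)) # hpow b # map hpow rest)
      = Htilde (pre @ p # m # b # rest) + Htilde (pre @ (p + m) # b # rest)
        - nested_series (map hpow pre @ hpow p # (\<lambda>k. hpow m (Suc k) * hpow b k) # map hpow rest)"
    by (simp add: nested_series_shift_inner hpow_add Htilde_eq_nested_series)
  moreover have "Htilde (pre @ (p + m) # b # rest) \<in> reduction_span N"
    using adm Cons by (auto intro: shorter)
  moreover have "nested_series (map hpow pre @ hpow p # (\<lambda>k. hpow m (Suc k) * hpow b k) # map hpow rest)
      \<in> reduction_span N"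
    using shifted_product_in_reduction_span[of "pre @ [p]" rest b m N] shorter[of "pre @ p # (3 * m + b) # rest"]
      adm Cons
    by simp
  ultimately show ?thesis
    using unshifted Cons by (simp add: laurent_span_add laurent_span_diff)
qed

lemma Htilde_in_reduction_span_if_shifted:
  assumes "admissible pre" "admissible post" "m > 0"
    and shifted: "nested_series (map hpow pre @ (\<lambda>k. hpow m (Suc k)) # map hpow post) \<in> reduction_span N"
  shows "Htilde (pre @ 3 * m # post) \<in> reduction_span N"
proof -
  obtain q where q: "q \<in> laurent_polys" "poly q 0 = 0"
    "\<And>k. fps_cong (3 ^ N) (hpow m (Suc k)) (hpow (3 * m) k + fps_const 3 * poly q (hterm k))"
    using hterm_Suc_power_cong[of N m] by blast
  define error where
    "error = fps_const 3 * nested_series (map hpow pre @ (\<lambda>k. poly (- q) (hterm k)) # map hpow post)"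
  have "fps_cong (3 ^ N) (hpow (3 * m) k) (hpow m (Suc k) + fps_const 3 * poly (- q) (hterm k))" for k
    using fps_cong_diff[OF q(3) fps_cong_refl, of k "fps_const 3 * poly q (hterm k)"]
    by (simp add: fps_cong_sym)
  then have "fps_cong (3 ^ N) (Htilde (pre @ 3 * m # post))
      (nested_series (map hpow pre @ (\<lambda>k. hpow m (Suc k) + fps_const 3 * poly (- q) (hterm k)) # map hpow post))"
    unfolding Htilde_eq_nested_series by (simp only: map_append list.map nested_series_cong_slot)
  also have "\<dots> = nested_series (map hpow pre @ (\<lambda>k. hpow m (Suc k)) # map hpow post) + error"
    by (simp only: error_def nested_series_add_slot nested_series_const_mult_slot)
  finally have "fps_cong (3 ^ N) (Htilde (pre @ 3 * m # post))
      (nested_series (map hpow pre @ (\<lambda>k. hpow m (Suc k)) # map hpow post) + error)" .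
  moreover have "error \<in> reduction_span N"
    unfolding error_def using assms q by (intro error_term_in_reduction_span laurent_polys_uminus) auto
  ultimately show ?thesis
    using shifted by (meson laurent_span_add laurent_span_cong)
qed

lemma Htilde_in_reduction_span: "admissible as \<Longrightarrow> Htilde as \<in> reduction_span N"
proof (induction as rule: wf_induct[OF wf_measures[of "[length, sum_list]"]])
  case (1 as)
  show ?case
  proof (cases "reduced as")
    case True
    then show ?thesis by (rule Htilde_reduced_in_reduction_span)
  next
    case False
    with "1.prems" obtain a where "a \<in> set as" "3 dvd a"
      by (auto simp: reduced_def admissible_def)
    then obtain pre post m where as: "as = pre @ 3 * m # post"
      by (metis split_list dvdE)
    with "1.prems" have adm: "admissible (pre @ m # post)" "m > 0"
      by auto
    have shorter: "Htilde bs \<in> reduction_span N" if "length bs < length (pre @ m # post)" "admissible bs" for bs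
      using "1.IH" that by (simp add: as)
    have unshifted: "Htilde (pre @ m # post) \<in> reduction_span N"
      using "1.IH" adm by (simp add: as)
    have "nested_series (map hpow pre @ (\<lambda>k. hpow m (Suc k)) # map hpow post) \<in> reduction_span N"
    proof (cases pre rule: rev_exhaust)
      case Nil
      then show ?thesis
        using shifted_head_in_reduction_span adm unshifted shorter by simp
    next
      case (snoc pre' p)
      then show ?thesis
        using shifted_inner_in_reduction_span[of pre' p m post N] adm unshifted shorter by simp
    qed
    with adm show ?thesis
      unfolding as by (intro Htilde_in_reduction_span_if_shifted) auto
  qed
qed

lemma Htilde_in_laurent_span_reduced:
  "admissible as \<Longrightarrow> Htilde as \<in> laurent_span (3 ^ N) (Htilde ` Collect reduced)"
proof (induction N arbitrary: as)
  case 0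
  show ?case
    using laurent_span_cong[OF laurent_span_zero fps_cong_1] by simp
next
  case (Suc N)
  have "fps_const 3 * Htilde as \<in> laurent_span (3 ^ Suc N) (Htilde ` Collect reduced)" if "admissible as" for as
    using laurent_span_const_mult[OF Suc.IH[OF that], of 3] by simp
  then have "(\<lambda>as. fps_const 3 * Htilde as) ` Collect admissible \<subseteq> laurent_span (3 ^ Suc N) (Htilde ` Collect reduced)"
    by blast
  then have "reduction_span (Suc N) \<subseteq> laurent_span (3 ^ Suc N) (Htilde ` Collect reduced)"
    by (intro laurent_span_subset) (auto intro: laurent_span_generator)
  then show ?case
    using Htilde_in_reduction_span[OF Suc.prems] by blast
qed

theorem lemma2p9:
  fixes bs :: "nat list" and \<gamma> :: nat
  assumes "\<forall>b\<in>set bs. b > 0" and "\<gamma> > 0"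
  shows "\<exists>(c0 :: int poly \<times> nat) (F :: nat list set) (c :: nat list \<Rightarrow> int poly \<times> nat).
           finite F \<and>
           (\<forall>as\<in>F. as \<noteq> [] \<and> (\<forall>a\<in>set as. a > 0 \<and> \<not> 3 dvd a)) \<and>
           fps_cong (3 ^ \<gamma>) (Htilde bs)
             (laurent_coeff c0 + (\<Sum>as\<in>F. laurent_coeff (c as) * Htilde as))"
proof -
  have "Htilde bs \<in> laurent_span (3 ^ \<gamma>) (Htilde ` Collect reduced)"
    using assms(1) by (intro Htilde_in_laurent_span_reduced) (simp add: admissible_def)
  from laurent_span_image_sum_repr[OF this] obtain F c where F: "finite F" "F \<subseteq> Collect reduced" "\<forall>as\<in>F. c as \<in> laurent_ring"
    and cong: "fps_cong (3 ^ \<gamma>) (Htilde bs) (\<Sum>as\<in>F. c as * Htilde as)"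
    by blast
  define d where "d as = inv laurent_coeff (c as)" for as
  have d: "laurent_coeff (d as) = c as" if "as \<in> F" for as
    using F(3) that unfolding d_def laurent_ring_def by (simp add: f_inv_into_f)
  define d0 where "d0 = inv laurent_coeff (if [] \<in> F then c [] else 0)"
  have "laurent_coeff d0 = (if [] \<in> F then c [] * Htilde [] else 0)"
    using F(3) zero_in_laurent_ring unfolding d0_def laurent_ring_def by (auto simp: f_inv_into_f)
  then have "(\<Sum>as\<in>F. c as * Htilde as) = laurent_coeff d0 + (\<Sum>as\<in>F - {[]}. laurent_coeff (d as) * Htilde as)"
    using F(1) d by (simp add: sum_diff1)
  moreover have "\<forall>as\<in>F - {[]}. as \<noteq> [] \<and> (\<forall>a\<in>set as. a > 0 \<and> \<not> 3 dvd a)"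
    using F(2) by (auto simp: reduced_def)
  ultimately show ?thesis
    using F(1) cong by (intro exI[of _ d0] exI[of _ "F - {[]}"] exI[of _ d]) auto
qed

end
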